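(* Let $2\le p\le\infty$ and $2\le q<\infty$, and let $\lambda=\{\lambda_n\}$ be such that the multiplier operator $M_\lambda\colon H_p\to\ell_q$, $M_\lambda f=\{\lambda_n\hat f(n)\}$, is bounded. Then $M_\lambda\colon H_p\to\ell_q$ is compact if and only if \[\limsup_{n\to\infty}|\lambda_n|=0.\]
   Context: $H_p$ is the classical Hardy space on the open unit disk, and $f=\sum_{n\ge0}\hat f(n)z^n$ is the Taylor expansion of $f$. *)

theory Defs
  imports "HOL-Analysis.Analysis"
begin

definition integral_mean :: "real \<Rightarrow> (complex \<Rightarrow> complex) \<Rightarrow> real \<Rightarrow> real" where
  "integral_mean p f r =
     (integral {0..2*pi} (\<lambda>t. norm (f (complex_of_real r * cis t)) powr p) / (2*pi)) powr (1/p)"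

definition hardy_norm :: "ereal \<Rightarrow> (complex \<Rightarrow> complex) \<Rightarrow> ereal" where
  "hardy_norm p f =
     (if p = \<infinity> then (SUP z\<in>ball 0 1. ereal (norm (f z)))
      else (SUP r\<in>{0<..<1}. ereal (integral_mean (real_of_ereal p) f r)))"

definition hardy_space :: "ereal \<Rightarrow> (complex \<Rightarrow> complex) set" where
  "hardy_space p = {f. f holomorphic_on ball 0 1 \<and> hardy_norm p f < \<infinity>}"

definition taylor_coeff :: "(complex \<Rightarrow> complex) \<Rightarrow> nat \<Rightarrow> complex" where
  "taylor_coeff f n = (deriv ^^ n) f 0 / of_nat (fact n)"

definition in_lq :: "real \<Rightarrow> (nat \<Rightarrow> complex) \<Rightarrow> bool" where
  "in_lq q a \<longleftrightarrow> summable (\<lambda>n. norm (a n) powr q)"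

definition lq_norm :: "real \<Rightarrow> (nat \<Rightarrow> complex) \<Rightarrow> real" where
  "lq_norm q a = (\<Sum>n. norm (a n) powr q) powr (1/q)"

definition multiplier :: "(nat \<Rightarrow> complex) \<Rightarrow> (complex \<Rightarrow> complex) \<Rightarrow> nat \<Rightarrow> complex" where
  "multiplier lam f = (\<lambda>n. lam n * taylor_coeff f n)"

definition multiplier_bounded :: "ereal \<Rightarrow> real \<Rightarrow> (nat \<Rightarrow> complex) \<Rightarrow> bool" where
  "multiplier_bounded p q lam \<longleftrightarrow>
     (\<exists>C. \<forall>f\<in>hardy_space p. in_lq q (multiplier lam f) \<and>
            ereal (lq_norm q (multiplier lam f)) \<le> ereal C * hardy_norm p f)"

text \<open>Compactness: every norm-bounded sequence in H_p has a subsequence whose images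
  converge in l_q (sequential characterisation of relative compactness of the image of
  the unit ball in the metric space l_q).\<close>
definition multiplier_compact :: "ereal \<Rightarrow> real \<Rightarrow> (nat \<Rightarrow> complex) \<Rightarrow> bool" where
  "multiplier_compact p q lam \<longleftrightarrow>
     (\<forall>F :: nat \<Rightarrow> complex \<Rightarrow> complex. \<forall>B::real.
        (\<forall>k. F k \<in> hardy_space p \<and> hardy_norm p (F k) \<le> ereal B) \<longrightarrow>
        (\<exists>r a. strict_mono r \<and> in_lq q a \<and>
           (\<lambda>j. lq_norm q (\<lambda>n. multiplier lam (F (r j)) n - a n)) \<longlonglongrightarrow> 0))"

end

theory Submission
  imports Defs "HOL-Complex_Analysis.Complex_Analysis" "HOL-Library.Diagonal_Subsequence"
begin

text \<open>
  Both directions reduce to \<open>\<lambda>\<^sub>n \<rightarrow> 0\<close>. If the multiplier is compact, apply compactness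
  to the monomials \<open>z\<^sup>n\<close>, which lie in the unit ball of H_p and are mapped to \<open>\<lambda>\<^sub>n e\<^sub>n\<close>:
  a subsequence with \<open>\<lambda>\<^sub>n e\<^sub>n - a \<rightarrow> 0\<close> in l_q forces \<open>\<lambda>\<^sub>n \<rightarrow> 0\<close> along it, because
  \<open>a\<^sub>n \<rightarrow> 0\<close> as well.

  Conversely, for \<open>p \<ge> 2\<close> the integral means dominate the L_2 means on circles (Young's
  inequality), so by Bessel's inequality the Taylor coefficients of a bounded sequence in H_p
  are uniformly bounded in l_2. A diagonal subsequence converges coefficientwise to some \<open>d\<close>,
  and the differences \<open>e\<^sub>j\<close> of the coefficients stay bounded in l_2. As \<open>q \<ge> 2\<close>, the tail
  of \<open>\<Sum>\<^sub>n |\<lambda>\<^sub>n e\<^sub>j\<^sub>n|\<^sup>q\<close> beyond \<open>N\<close> is at most a constant times \<open>sup\<^sub>n\<^sub>\<ge>\<^sub>N |\<lambda>\<^sub>n|\<^sup>q\<close>,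
  while its first \<open>N\<close> terms tend to \<open>0\<close> as \<open>j \<rightarrow> \<infinity>\<close>; hence the images converge to
  \<open>\<lambda> d\<close> in l_q.
\<close>

section \<open>Sequences and subsequences\<close>

lemma diagonal_subsequence_convergent:
  fixes c :: "nat \<Rightarrow> nat \<Rightarrow> 'a::heine_borel"
  assumes bounded: "\<And>n. bounded (range (\<lambda>k. c k n))"
  obtains r :: "nat \<Rightarrow> nat" and d where "strict_mono r" "\<And>n. (\<lambda>j. c (r j) n) \<longlonglongrightarrow> d n"
proof -
  interpret S: subseqs "\<lambda>n s. \<exists>l. (\<lambda>i. c (s i) n) \<longlonglongrightarrow> l"
  proof
    fix n and s :: "nat \<Rightarrow> nat"
    have "bounded (range (\<lambda>i. c (s i) n))"
      using bounded by (rule bounded_subset) auto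
    then obtain l r where "strict_mono r" "((\<lambda>i. c (s i) n) \<circ> r) \<longlonglongrightarrow> l"
      using bounded_imp_convergent_subsequence by blast
    then show "\<exists>r'. strict_mono r' \<and> (\<exists>l. (\<lambda>i. c ((s \<circ> r') i) n) \<longlonglongrightarrow> l)"
      by (auto simp: o_def)
  qed
  have "\<forall>n. \<exists>l. (\<lambda>i. c (S.diagseq i) n) \<longlonglongrightarrow> l"
  proof
    fix n
    obtain l where "(\<lambda>i. c ((S.diagseq \<circ> (+) (Suc n)) i) n) \<longlonglongrightarrow> l"
    proof (atomize_elim, rule S.diagseq_holds)
      fix r s n
      assume "strict_mono (r :: nat \<Rightarrow> nat)" and "\<exists>l. (\<lambda>i. c (s i) n) \<longlonglongrightarrow> l"
      then show "\<exists>l. (\<lambda>i. c ((s \<circ> r) i) n) \<longlonglongrightarrow> l"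
        using LIMSEQ_subseq_LIMSEQ[of "\<lambda>i. c (s i) n"] by (auto simp: o_def)
    qed
    then have "(\<lambda>i. c (S.diagseq (i + Suc n)) n) \<longlonglongrightarrow> l"
      by (simp add: ac_simps)
    then have "(\<lambda>i. c (S.diagseq i) n) \<longlonglongrightarrow> l"
      by (rule LIMSEQ_offset)
    then show "\<exists>l. (\<lambda>i. c (S.diagseq i) n) \<longlonglongrightarrow> l" ..
  qed
  then have "\<exists>d. \<forall>n. (\<lambda>j. c (S.diagseq j) n) \<longlonglongrightarrow> d n"
    by (rule choice)
  then obtain d where "\<And>n. (\<lambda>j. c (S.diagseq j) n) \<longlonglongrightarrow> d n"
    by blast
  with S.subseq_diagseq show thesis
    by (rule that)
qed

lemma norm_le_of_sum_squares_le:
  fixes x :: "nat \<Rightarrow> 'a::real_normed_vector"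
  assumes "\<And>N. (\<Sum>n<N. norm (x n) ^ 2) \<le> K ^ 2" and "0 \<le> K"
  shows "norm (x n) \<le> K"
proof -
  have "norm (x n) ^ 2 \<le> (\<Sum>m<Suc n. norm (x m) ^ 2)"
    by (simp add: sum_nonneg)
  also have "\<dots> \<le> K ^ 2"
    by (rule assms(1))
  finally show ?thesis
    using assms(2) by (rule power2_le_imp_le)
qed

lemma summable_of_sum_squares_le:
  fixes x :: "nat \<Rightarrow> 'a::real_normed_vector"
  assumes "\<And>N. (\<Sum>n<N. norm (x n) ^ 2) \<le> K ^ 2"
  shows "summable (\<lambda>n. norm (x n) ^ 2)" and "(\<Sum>n. norm (x n) ^ 2) \<le> K ^ 2"
proof -
  show summable: "summable (\<lambda>n. norm (x n) ^ 2)"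
    using assms[of "Suc _"] by (intro bounded_imp_summable[of _ "K ^ 2"]) (auto simp: lessThan_Suc_atMost)
  show "(\<Sum>n. norm (x n) ^ 2) \<le> K ^ 2"
    by (rule suminf_le_const[OF summable assms])
qed

lemma sum_squares_diff_le:
  fixes x y :: "nat \<Rightarrow> 'a::real_normed_vector"
  assumes "\<And>N. (\<Sum>n<N. norm (x n) ^ 2) \<le> K ^ 2" and "\<And>N. (\<Sum>n<N. norm (y n) ^ 2) \<le> K ^ 2"
  shows "(\<Sum>n<N. norm (x n - y n) ^ 2) \<le> (2 * K) ^ 2"
proof -
  have "norm (x n - y n) ^ 2 \<le> 2 * norm (x n) ^ 2 + 2 * norm (y n) ^ 2" for n
  proof -
    have "norm (x n - y n) ^ 2 \<le> (norm (x n) + norm (y n)) ^ 2"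
      by (intro power_mono norm_triangle_ineq4) auto
    also have "\<dots> \<le> 2 * norm (x n) ^ 2 + 2 * norm (y n) ^ 2"
      using sum_squares_ge_zero[of "norm (x n) - norm (y n)" 0] by (simp add: power2_eq_square algebra_simps)
    finally show ?thesis .
  qed
  then have "(\<Sum>n<N. norm (x n - y n) ^ 2) \<le> 2 * (\<Sum>n<N. norm (x n) ^ 2) + 2 * (\<Sum>n<N. norm (y n) ^ 2)"
    by (auto simp: sum_distrib_left sum.distrib[symmetric] intro: sum_mono)
  also have "\<dots> \<le> (2 * K) ^ 2"
    using assms[of N] by (simp add: power_mult_distrib)
  finally show ?thesis .
qed

lemma limsup_norm_eq_0_iff:
  fixes x :: "nat \<Rightarrow> 'a::real_normed_vector"
  shows "limsup (\<lambda>n. ereal (norm (x n))) = 0 \<longleftrightarrow> x \<longlonglongrightarrow> 0"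
proof
  assume limsup: "limsup (\<lambda>n. ereal (norm (x n))) = 0"
  have "(\<lambda>n. norm (x n)) \<longlonglongrightarrow> 0"
  proof (rule order_tendstoI)
    show "\<forall>\<^sub>F n in sequentially. y < norm (x n)" if "y < 0" for y :: real
      using that by (intro always_eventually allI) (rule less_le_trans, auto)
    show "\<forall>\<^sub>F n in sequentially. norm (x n) < y" if "0 < y" for y :: real
    proof -
      have "limsup (\<lambda>n. ereal (norm (x n))) < ereal y"
        using limsup that by simp
      from Limsup_lessD[OF this] show ?thesis
        by simp
    qed
  qed
  then show "x \<longlonglongrightarrow> 0"
    by (rule tendsto_norm_zero_cancel)
next
  assume "x \<longlonglongrightarrow> 0"
  then have "(\<lambda>n. ereal (norm (x n))) \<longlonglongrightarrow> ereal 0"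
    by (simp add: tendsto_norm_zero)
  then show "limsup (\<lambda>n. ereal (norm (x n))) = 0"
    by (simp add: lim_imp_Limsup zero_ereal_def)
qed

lemma not_LIMSEQ_zero_imp_bounded_below_subseq:
  fixes x :: "nat \<Rightarrow> 'a::real_normed_vector"
  assumes "\<not> x \<longlonglongrightarrow> 0"
  obtains \<delta> and s :: "nat \<Rightarrow> nat" where "0 < \<delta>" "strict_mono s" "\<And>k. \<delta> \<le> norm (x (s k))"
proof -
  obtain \<delta> where "0 < \<delta>" "\<not> (\<forall>\<^sub>F n in sequentially. norm (x n) < \<delta>)"
    using assms by (auto simp: tendsto_iff dist_norm)
  from not_eventually_sequentiallyD[OF this(2)]
  have "\<exists>s::nat \<Rightarrow> nat. strict_mono s \<and> (\<forall>k. \<delta> \<le> norm (x (s k)))"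
    by (simp add: not_less)
  then obtain s :: "nat \<Rightarrow> nat" where "strict_mono s" "\<And>k. \<delta> \<le> norm (x (s k))"
    by blast
  with \<open>0 < \<delta>\<close> show thesis
    by (rule that)
qed

section \<open>The sequence space l_q\<close>

lemma norm_le_lq_norm:
  assumes "0 < q" and "in_lq q x"
  shows "norm (x m) \<le> lq_norm q x"
proof -
  have "norm (x m) powr q \<le> (\<Sum>n. norm (x n) powr q)"
    using sum_le_suminf[of "\<lambda>n. norm (x n) powr q" "{m}"] assms(2) by (simp add: in_lq_def)
  then have "(norm (x m) powr q) powr (1/q) \<le> (\<Sum>n. norm (x n) powr q) powr (1/q)"
    using assms(1) by (intro powr_mono2) auto
  then show ?thesis
    using assms(1) by (simp add: lq_norm_def powr_powr)
qed

lemma in_lq_imp_LIMSEQ_zero: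
  assumes "0 < q" and "in_lq q x"
  shows "x \<longlonglongrightarrow> 0"
proof -
  have "(\<lambda>n. norm (x n) powr q) \<longlonglongrightarrow> 0"
    using assms(2) unfolding in_lq_def by (rule summable_LIMSEQ_zero)
  then have "(\<lambda>n. (norm (x n) powr q) powr (1/q)) \<longlonglongrightarrow> 0"
    by (rule tendsto_zero_powrI[OF _ tendsto_const]) (use assms(1) in auto)
  moreover have "(norm (x n) powr q) powr (1/q) = norm (x n)" for n
    using assms(1) by (simp add: powr_powr)
  ultimately show ?thesis
    by (simp add: tendsto_norm_zero_iff)
qed

lemma powr_le_powr_times_square:
  fixes x K q :: real
  assumes "0 \<le> x" "x \<le> K" "2 \<le> q"
  shows "x powr q \<le> K powr (q - 2) * x ^ 2"
proof (cases "x = 0")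
  case False
  have "x powr q = x powr (q - 2) * x powr 2"
    by (simp add: powr_add[symmetric])
  also have "\<dots> = x powr (q - 2) * x ^ 2"
    using False assms(1) by (simp add: powr_numeral)
  also have "\<dots> \<le> K powr (q - 2) * x ^ 2"
    using assms by (intro mult_right_mono powr_mono2) auto
  finally show ?thesis .
qed (use assms in simp)

lemma norm_mult_powr_le:
  fixes a w :: "'a::real_normed_div_algebra"
  assumes "norm a \<le> L" and "norm w \<le> K" and "2 \<le> q"
  shows "norm (a * w) powr q \<le> L powr q * K powr (q - 2) * norm w ^ 2"
proof -
  have "norm (a * w) powr q = norm a powr q * norm w powr q"
    by (simp add: norm_mult powr_mult)
  also have "\<dots> \<le> L powr q * (K powr (q - 2) * norm w ^ 2)"
    using assms powr_le_powr_times_square[OF norm_ge_zero assms(2,3)]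
    by (intro mult_mono powr_mono2) auto
  finally show ?thesis
    by (simp add: mult.assoc)
qed

lemma in_lq_mult_of_sum_squares_le:
  fixes lam x :: "nat \<Rightarrow> complex"
  assumes l2: "\<And>N. (\<Sum>n<N. norm (x n) ^ 2) \<le> K ^ 2" and "0 \<le> K"
    and "\<And>n. norm (lam n) \<le> L" and "2 \<le> q"
  shows "in_lq q (\<lambda>n. lam n * x n)"
  unfolding in_lq_def
proof (rule summable_comparison_test'[where N = 0])
  show "summable (\<lambda>n. L powr q * K powr (q - 2) * norm (x n) ^ 2)"
    by (intro summable_mult summable_of_sum_squares_le(1)[OF l2])
  show "norm (norm (lam n * x n) powr q) \<le> L powr q * K powr (q - 2) * norm (x n) ^ 2" for n
    using norm_mult_powr_le[OF assms(3) norm_le_of_sum_squares_le[OF l2 assms(2)] assms(4)] by simp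
qed

lemma lq_sum_le_head_plus_tail:
  fixes lam x :: "nat \<Rightarrow> complex"
  assumes l2: "\<And>N. (\<Sum>n<N. norm (x n) ^ 2) \<le> K ^ 2" and K: "0 \<le> K"
    and lq: "in_lq q (\<lambda>n. lam n * x n)"
    and tail: "\<And>n. N \<le> n \<Longrightarrow> norm (lam n) \<le> \<eta>" and q: "2 \<le> q"
  shows "(\<Sum>n. norm (lam n * x n) powr q) \<le> (\<Sum>n<N. norm (lam n * x n) powr q) + \<eta> powr q * K powr q"
proof -
  define f where "f = (\<lambda>n. norm (lam n * x n) powr q)"
  define head where "head n = (if n < N then f n else 0)" for n
  define C where "C = \<eta> powr q * K powr (q - 2)"
  have f: "summable f"
    using lq by (simp add: f_def in_lq_def)
  have C: "0 \<le> C"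
    by (simp add: C_def)
  have "head sums (\<Sum>n<N. f n)"
    unfolding head_def using sums_If_finite_set[of "{..<N}" f] by simp
  then have head: "summable head" "suminf head = (\<Sum>n<N. f n)"
    by (auto simp: sums_iff)
  have x2: "summable (\<lambda>n. norm (x n) ^ 2)" "(\<Sum>n. norm (x n) ^ 2) \<le> K ^ 2"
    using summable_of_sum_squares_le[OF l2] by auto
  have "f n \<le> head n + C * norm (x n) ^ 2" for n
    using norm_mult_powr_le[OF tail norm_le_of_sum_squares_le[OF l2 K] q, of n] C
    by (cases "n < N") (auto simp: f_def head_def C_def)
  then have "suminf f \<le> (\<Sum>n. head n + C * norm (x n) ^ 2)"
    using f x2 head by (intro suminf_le summable_add summable_mult) auto
  also have "\<dots> = (\<Sum>n<N. f n) + C * (\<Sum>n. norm (x n) ^ 2)"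
    using head x2 by (simp add: suminf_add[symmetric] suminf_mult)
  also have "\<dots> \<le> (\<Sum>n<N. f n) + C * K ^ 2"
    using x2 C by (intro add_left_mono mult_left_mono) auto
  also have "C * K ^ 2 = \<eta> powr q * K powr q"
  proof (cases "K = 0")
    case False
    then have "K ^ 2 = K powr 2"
      using K by (simp add: powr_numeral)
    then show ?thesis
      by (simp add: C_def mult.assoc powr_add[symmetric])
  qed (simp add: C_def)
  finally show ?thesis
    by (simp add: f_def)
qed

lemma lq_sum_mult_eventually_less:
  fixes lam :: "nat \<Rightarrow> complex" and e :: "nat \<Rightarrow> nat \<Rightarrow> complex"
  assumes l2: "\<And>j N. (\<Sum>n<N. norm (e j n) ^ 2) \<le> K ^ 2" and K: "0 \<le> K"
    and lq: "\<And>j. in_lq q (\<lambda>n. lam n * e j n)"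
    and pointwise: "\<And>n. (\<lambda>j. e j n) \<longlonglongrightarrow> 0" and lam: "lam \<longlonglongrightarrow> 0" and q: "2 \<le> q"
    and "0 < \<epsilon>"
  shows "\<forall>\<^sub>F j in sequentially. (\<Sum>n. norm (lam n * e j n) powr q) < \<epsilon>"
proof -
  define \<eta> where "\<eta> = (\<epsilon> / (2 * (K powr q + 1))) powr (1/q)"
  have Kq: "0 < K powr q + 1"
    by (simp add: add_nonneg_pos)
  then have "0 < \<eta>"
    using \<open>0 < \<epsilon>\<close> by (simp add: \<eta>_def)
  have tail: "\<eta> powr q * K powr q < \<epsilon> / 2"
    using \<open>0 < \<epsilon>\<close> q Kq by (simp add: \<eta>_def powr_powr field_simps)
  obtain N where lam_small: "\<And>n. N \<le> n \<Longrightarrow> norm (lam n) \<le> \<eta>"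
    using lam \<open>0 < \<eta>\<close> unfolding LIMSEQ_iff by (metis diff_zero less_imp_le)
  have "(\<lambda>j. \<Sum>n<N. norm (lam n * e j n) powr q) \<longlonglongrightarrow> 0"
    using pointwise q
    by (intro tendsto_null_sum tendsto_zero_powrI tendsto_const tendsto_norm_zero tendsto_mult_right_zero)
      auto
  then have "\<forall>\<^sub>F j in sequentially. (\<Sum>n<N. norm (lam n * e j n) powr q) < \<epsilon> / 2"
    using \<open>0 < \<epsilon>\<close> by (intro order_tendstoD) auto
  then show ?thesis
  proof (rule eventually_mono)
    fix j
    assume "(\<Sum>n<N. norm (lam n * e j n) powr q) < \<epsilon> / 2"
    then show "(\<Sum>n. norm (lam n * e j n) powr q) < \<epsilon>"
      using lq_sum_le_head_plus_tail[where x = "e j" and N = N, OF l2 K lq lam_small q] tail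
      by simp
  qed
qed

lemma lq_norm_mult_LIMSEQ_zero:
  fixes lam :: "nat \<Rightarrow> complex" and e :: "nat \<Rightarrow> nat \<Rightarrow> complex"
  assumes l2: "\<And>j N. (\<Sum>n<N. norm (e j n) ^ 2) \<le> K ^ 2" and K: "0 \<le> K"
    and pointwise: "\<And>n. (\<lambda>j. e j n) \<longlonglongrightarrow> 0" and lam: "lam \<longlonglongrightarrow> 0" and q: "2 \<le> q"
  shows "(\<lambda>j. lq_norm q (\<lambda>n. lam n * e j n)) \<longlonglongrightarrow> 0"
proof -
  define S where "S j = (\<Sum>n. norm (lam n * e j n) powr q)" for j
  obtain L where "\<And>n. norm (lam n) \<le> L"
    using lam by (metis BseqE convergentI convergent_imp_Bseq less_imp_le)
  then have lq: "in_lq q (\<lambda>n. lam n * e j n)" for j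
    using in_lq_mult_of_sum_squares_le[OF l2 K _ q] by blast
  have S_nonneg: "0 \<le> S j" for j
    using lq by (simp add: S_def in_lq_def suminf_nonneg)
  have "S \<longlonglongrightarrow> 0"
  proof (rule order_tendstoI)
    show "\<forall>\<^sub>F j in sequentially. y < S j" if "y < 0" for y
      using that S_nonneg by (intro always_eventually allI) (rule less_le_trans)
    show "\<forall>\<^sub>F j in sequentially. S j < \<epsilon>" if "0 < \<epsilon>" for \<epsilon>
      unfolding S_def using l2 K lq pointwise lam q that by (rule lq_sum_mult_eventually_less)
  qed
  then have "(\<lambda>j. S j powr (1/q)) \<longlonglongrightarrow> 0"
    by (rule tendsto_zero_powrI[OF _ tendsto_const]) (use q S_nonneg in auto)
  then show ?thesis
    by (simp add: lq_norm_def S_def)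
qed

section \<open>Taylor coefficients on circles\<close>

lemma taylor_coeff_power:
  "taylor_coeff (\<lambda>z. z ^ m) n = (if n = m then 1 else 0)"
proof -
  have "(deriv ^^ n) (\<lambda>z::complex. z ^ m) 0 = pochhammer (of_nat (Suc m - n)) n * 0 ^ (m - n)"
    using higher_deriv_power[of n 0 m 0] by simp
  also have "\<dots> = (if n = m then fact m else 0)"
    by (cases n m rule: linorder_cases) (auto simp: pochhammer_fact pochhammer_0_left)
  finally show ?thesis
    by (simp add: taylor_coeff_def)
qed

lemma multiplier_power:
  "multiplier lam (\<lambda>z. z ^ m) = (\<lambda>n. if n = m then lam m else 0)"
  by (auto simp: multiplier_def taylor_coeff_power)

lemma continuous_on_circle:
  assumes "f holomorphic_on ball 0 1" and "0 \<le> r" "r < 1"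
  shows "continuous_on {0..2*pi} (\<lambda>t. f (complex_of_real r * cis t))"
proof (rule continuous_on_compose2[OF holomorphic_on_imp_continuous_on[OF assms(1)]])
  show "continuous_on {0..2*pi} (\<lambda>t. complex_of_real r * cis t)"
    by (intro continuous_intros)
  show "(\<lambda>t. complex_of_real r * cis t) ` {0..2*pi} \<subseteq> ball 0 1"
    using assms(2,3) by (auto simp: norm_mult)
qed

lemma taylor_coeff_circle_has_integral:
  assumes holo: "f holomorphic_on ball 0 1" and r: "0 < r" "r < 1"
  shows "((\<lambda>t. f (complex_of_real r * cis t) * cis (- (real n * t))) has_integral
          (2 * pi * taylor_coeff f n * r ^ n)) {0..2*pi}"
proof -
  have "continuous_on (cball 0 r) f"
    using holo r by (intro holomorphic_on_imp_continuous_on holomorphic_on_subset[OF holo]) auto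
  moreover have "f holomorphic_on ball 0 r"
    using r by (intro holomorphic_on_subset[OF holo]) (auto simp: subset_eq)
  ultimately have "((\<lambda>u. f u / (u - 0) ^ (Suc n)) has_contour_integral
                 ((2 * pi * \<i>) / (fact n) * (deriv ^^ n) f 0)) (circlepath 0 r)"
    using r by (intro Cauchy_has_contour_integral_higher_derivative_circlepath) auto
  then have "((\<lambda>t. f (0 + r * cis t) / (0 + r * cis t) ^ Suc n * r * \<i> * cis t) has_integral
               ((2 * pi * \<i>) / (fact n) * (deriv ^^ n) f 0)) {0..2*pi}"
    unfolding circlepath_def by (subst (asm) has_contour_integral_part_circlepath_iff) auto
  then have "((\<lambda>t. (r ^ n / \<i>) * (f (0 + r * cis t) / (0 + r * cis t) ^ Suc n * r * \<i> * cis t)) has_integral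
               (r ^ n / \<i>) * ((2 * pi * \<i>) / (fact n) * (deriv ^^ n) f 0)) {0..2*pi}"
    by (rule has_integral_mult_right)
  moreover have "(r ^ n / \<i>) * (f (0 + r * cis t) / (0 + r * cis t) ^ Suc n * r * \<i> * cis t)
      = f (complex_of_real r * cis t) * cis (- (real n * t))" for t
  proof -
    have "cis t ^ n * cis (- (real n * t)) = 1"
      by (subst Complex.DeMoivre) (simp add: cis_mult)
    then have "cis (- (real n * t)) = inverse (cis t ^ n)"
      by (metis inverse_unique mult.commute)
    then show ?thesis
      using r by (simp add: field_simps power_mult_distrib)
  qed
  moreover have "(r ^ n / \<i>) * ((2 * pi * \<i>) / (fact n) * (deriv ^^ n) f 0) = 2 * pi * taylor_coeff f n * r ^ n"
    by (simp add: taylor_coeff_def field_simps)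
  ultimately show ?thesis
    by simp
qed

lemma cis_orthogonality:
  "((\<lambda>t. cis (real m * t) * cis (- (real n * t))) has_integral (if n = m then 2 * pi else 0)) {0..2*pi}"
proof -
  \<comment> \<open>Read off from the Taylor coefficients of \<open>z\<^sup>m\<close> on the circle of radius \<open>1/2\<close>.\<close>
  define r :: real where "r = 1/2"
  have r: "0 < r" "r < 1"
    by (auto simp: r_def)
  have "((\<lambda>t. (complex_of_real r * cis t) ^ m * cis (- (real n * t))) has_integral
          (2 * pi * taylor_coeff (\<lambda>z. z ^ m) n * r ^ n)) {0..2*pi}"
    using taylor_coeff_circle_has_integral[of "\<lambda>z. z ^ m" r n, OF _ r] by (simp add: holomorphic_intros)
  then have "((\<lambda>t. (1 / r ^ m) * ((complex_of_real r * cis t) ^ m * cis (- (real n * t)))) has_integral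
          (1 / r ^ m) * (2 * pi * taylor_coeff (\<lambda>z. z ^ m) n * r ^ n)) {0..2*pi}"
    by (rule has_integral_mult_right)
  moreover have "(1 / r ^ m) * ((complex_of_real r * cis t) ^ m * cis (- (real n * t)))
     = cis (real m * t) * cis (- (real n * t))" for t
    using r by (simp add: power_mult_distrib) (metis Complex.DeMoivre)
  moreover have "(1 / r ^ m) * (2 * pi * taylor_coeff (\<lambda>z. z ^ m) n * r ^ n) = (if n = m then 2 * pi else 0)"
    using r by (simp add: taylor_coeff_power)
  ultimately show ?thesis
    by simp
qed

lemma of_real_norm_square: "complex_of_real (norm z) ^ 2 = z * cnj z"
  using complex_norm_square[of z] by simp

lemma trig_poly_norm_square_has_integral:
  fixes a :: "nat \<Rightarrow> complex" and N :: nat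
  defines "P \<equiv> \<lambda>t. \<Sum>n<N. a n * cis (real n * t)"
  shows "((\<lambda>t. P t * cnj (P t)) has_integral 2 * pi * complex_of_real (\<Sum>n<N. norm (a n) ^ 2)) {0..2*pi}"
proof -
  have "((\<lambda>t. \<Sum>m<N. \<Sum>n<N. a n * cnj (a m) * (cis (real n * t) * cis (- (real m * t))))
          has_integral (\<Sum>m<N. \<Sum>n<N. a n * cnj (a m) * (if m = n then 2 * pi else 0))) {0..2*pi}"
    by (intro has_integral_sum has_integral_mult_right cis_orthogonality) auto
  moreover have "P t * cnj (P t)
      = (\<Sum>m<N. \<Sum>n<N. a n * cnj (a m) * (cis (real n * t) * cis (- (real m * t))))" for t
    by (simp add: P_def cis_cnj sum_distrib_right sum_distrib_left mult_ac)
  moreover have "(\<Sum>m<N. \<Sum>n<N. a n * cnj (a m) * (if m = n then 2 * pi else 0))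
      = 2 * pi * complex_of_real (\<Sum>n<N. norm (a n) ^ 2)"
    by (simp add: sum_distrib_left of_real_norm_square mult_ac if_distrib cong: if_cong)
  ultimately show ?thesis
    by simp
qed

lemma bessel_inequality:
  fixes g :: "real \<Rightarrow> complex" and a :: "nat \<Rightarrow> complex"
  assumes cont: "continuous_on {0..2*pi} g"
    and coeff: "\<And>n. ((\<lambda>t. g t * cis (- (real n * t))) has_integral 2 * pi * a n) {0..2*pi}"
  shows "2 * pi * (\<Sum>n<N. norm (a n) ^ 2) \<le> integral {0..2*pi} (\<lambda>t. norm (g t) ^ 2)"
proof -
  define P where "P t = (\<Sum>n<N. a n * cis (real n * t))" for t
  define S where "S = (\<Sum>n<N. norm (a n) ^ 2)"
  define G where "G = integral {0..2*pi} (\<lambda>t. norm (g t) ^ 2)"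
  have norm_P: "((\<lambda>t. P t * cnj (P t)) has_integral 2 * pi * complex_of_real S) {0..2*pi}"
    unfolding P_def S_def by (rule trig_poly_norm_square_has_integral)
  have "((\<lambda>t. \<Sum>n<N. cnj (a n) * (g t * cis (- (real n * t)))) has_integral
         (\<Sum>n<N. cnj (a n) * (2 * pi * a n))) {0..2*pi}"
    by (intro has_integral_sum has_integral_mult_right coeff) auto
  moreover have "cnj (P t) * g t = (\<Sum>n<N. cnj (a n) * (g t * cis (- (real n * t))))" for t
    by (simp add: P_def cis_cnj sum_distrib_right sum_distrib_left mult_ac)
  moreover have "(\<Sum>n<N. cnj (a n) * (2 * pi * a n)) = 2 * pi * complex_of_real S"
    by (simp add: S_def sum_distrib_left of_real_norm_square mult_ac)
  ultimately have inner_P_g: "((\<lambda>t. cnj (P t) * g t) has_integral 2 * pi * complex_of_real S) {0..2*pi}"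
    by simp
  have norm_g: "((\<lambda>t. norm (g t) ^ 2) has_integral G) {0..2*pi}"
    unfolding G_def using cont
    by (intro integrable_integral integrable_continuous_interval continuous_intros)
  have "((\<lambda>t. norm (g t) ^ 2 + Re (P t * cnj (P t)) - 2 * Re (cnj (P t) * g t)) has_integral
          G + Re (2 * pi * complex_of_real S) - 2 * Re (2 * pi * complex_of_real S)) {0..2*pi}"
    by (intro has_integral_diff has_integral_add has_integral_mult_right has_integral_Re
        norm_g norm_P inner_P_g)
  moreover have "norm (g t) ^ 2 + Re (P t * cnj (P t)) - 2 * Re (cnj (P t) * g t) = norm (g t - P t) ^ 2" for t
    unfolding cmod_power2 by (simp add: algebra_simps power2_eq_square)
  ultimately have "((\<lambda>t. norm (g t - P t) ^ 2) has_integral G - 2 * pi * S) {0..2*pi}"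
    by (simp add: mult_ac)
  then have "0 \<le> G - 2 * pi * S"
    by (rule has_integral_nonneg) auto
  then show ?thesis
    by (simp add: G_def S_def)
qed

section \<open>Hardy norms\<close>

lemma hardy_norm_nonneg: "0 \<le> hardy_norm p f"
proof -
  have "0 \<le> ereal (norm (f 0))"
    by simp
  also have "\<dots> \<le> (SUP z\<in>ball 0 1. ereal (norm (f z)))"
    by (rule SUP_upper) simp
  finally have "0 \<le> (SUP z\<in>ball 0 1. ereal (norm (f z)))" .
  moreover have "0 \<le> ereal (integral_mean (real_of_ereal p) f (1/2))"
    by (simp add: integral_mean_def)
  then have "0 \<le> (SUP r\<in>{0<..<1}. ereal (integral_mean (real_of_ereal p) f r))"
    by (rule order_trans) (rule SUP_upper; simp)
  ultimately show ?thesis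
    by (simp add: hardy_norm_def)
qed

lemma hardy_norm_power_le_1:
  assumes "0 < p"
  shows "hardy_norm p (\<lambda>z. z ^ m) \<le> 1"
proof (cases "p = \<infinity>")
  case True
  have "ereal (norm (z ^ m)) \<le> 1" if "z \<in> ball 0 1" for z :: complex
    using that by (simp add: norm_power power_le_one)
  then show ?thesis
    using True by (simp add: hardy_norm_def SUP_le_iff)
next
  case False
  define p' where "p' = real_of_ereal p"
  have "0 < p'"
    using assms False unfolding p'_def by (cases p) auto
  have "integral_mean p' (\<lambda>z. z ^ m) r \<le> 1" if r: "0 < r" "r < 1" for r
  proof -
    have "integral {0..2*pi} (\<lambda>t. norm ((complex_of_real r * cis t) ^ m) powr p')
        = 2 * pi * (r ^ m) powr p'"
      using r by (simp add: norm_power norm_mult)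
    then have "integral_mean p' (\<lambda>z. z ^ m) r = r ^ m"
      using \<open>0 < p'\<close> r by (simp add: integral_mean_def powr_powr)
    also have "\<dots> \<le> 1"
      using r by (simp add: power_le_one)
    finally show ?thesis .
  qed
  then show ?thesis
    using False by (simp add: hardy_norm_def SUP_le_iff p'_def)
qed

lemma power_in_hardy_space:
  assumes "0 < p"
  shows "(\<lambda>z. z ^ m) \<in> hardy_space p"
  using hardy_norm_power_le_1[OF assms, of m]
  by (auto simp: hardy_space_def holomorphic_intros intro: le_less_trans[of _ 1])

lemma young_square_le:
  fixes x M p :: real
  assumes "0 \<le> x" and "0 < M" and "2 \<le> p"
  shows "x ^ 2 \<le> 2/p * (x powr p * M powr (2 - p)) + (1 - 2/p) * M ^ 2"
proof (cases "x = 0")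
  case True
  have "0 \<le> (1 - 2/p) * M ^ 2"
    using assms by (simp add: field_simps)
  with True show ?thesis
    by simp
next
  case False
  define y where "y = x / M"
  have "0 < y"
    using False assms by (simp add: y_def)
  have "(y powr p) powr (2/p) * 1 powr (1 - 2/p) \<le> 2/p * y powr p + (1 - 2/p) * 1"
    using \<open>0 < y\<close> assms by (intro Youngs_inequality_0) (auto simp: field_simps)
  moreover have "(y powr p) powr (2/p) = y ^ 2"
    using \<open>0 < y\<close> assms by (simp add: powr_powr flip: powr_numeral)
  ultimately have "y ^ 2 * M ^ 2 \<le> (2/p * y powr p + (1 - 2/p)) * M ^ 2"
    by (intro mult_right_mono) simp_all
  moreover have "y ^ 2 * M ^ 2 = x ^ 2"
    using assms by (simp add: y_def power_divide)
  moreover have "y powr p * M ^ 2 = x powr p * M powr (2 - p)"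
    using assms \<open>0 < y\<close> by (simp add: y_def powr_divide powr_diff flip: powr_numeral)
  ultimately show ?thesis
    by (simp add: algebra_simps)
qed

lemma integral_square_le_of_integral_powr_le:
  fixes g :: "real \<Rightarrow> real" and a b M p :: real
  assumes cont: "continuous_on {a..b} g" and nonneg: "\<And>t. t \<in> {a..b} \<Longrightarrow> 0 \<le> g t"
    and "a \<le> b" and "0 < M" and p: "2 \<le> p"
    and powr_le: "integral {a..b} (\<lambda>t. g t powr p) \<le> (b - a) * M powr p"
  shows "integral {a..b} (\<lambda>t. g t ^ 2) \<le> (b - a) * M ^ 2"
proof -
  define c where "c = 2/p * M powr (2 - p)"
  define d where "d = (1 - 2/p) * M ^ 2"
  have "0 \<le> c"
    using p by (simp add: c_def)
  have powr_integrable: "(\<lambda>t. g t powr p) integrable_on {a..b}"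
    using cont nonneg p
    by (intro integrable_continuous_interval continuous_on_powr' continuous_intros) auto
  have "integral {a..b} (\<lambda>t. g t ^ 2) \<le> integral {a..b} (\<lambda>t. c * g t powr p + d)"
  proof (rule integral_le)
    show "(\<lambda>t. g t ^ 2) integrable_on {a..b}"
      by (intro integrable_continuous_interval continuous_intros cont)
    show "(\<lambda>t. c * g t powr p + d) integrable_on {a..b}"
      using integrable_cmul[OF powr_integrable, of c] by (intro integrable_add integrable_const_ivl) simp_all
    show "g t ^ 2 \<le> c * g t powr p + d" if "t \<in> {a..b}" for t
      using young_square_le[OF nonneg[OF that] \<open>0 < M\<close> p] by (simp add: c_def d_def mult_ac)
  qed
  also have "\<dots> = c * integral {a..b} (\<lambda>t. g t powr p) + (b - a) * d"
  proof (rule integral_unique)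
    have "((\<lambda>t. d) has_integral (b - a) * d) {a..b}"
      using has_integral_const_real[of d a b] \<open>a \<le> b\<close> by simp
    then show "((\<lambda>t. c * g t powr p + d) has_integral
        c * integral {a..b} (\<lambda>t. g t powr p) + (b - a) * d) {a..b}"
      by (intro has_integral_add has_integral_mult_right integrable_integral powr_integrable)
  qed
  also have "\<dots> \<le> c * ((b - a) * M powr p) + (b - a) * d"
    using powr_le \<open>0 \<le> c\<close> by (intro add_right_mono mult_left_mono)
  also have "\<dots> = (b - a) * M ^ 2"
    using \<open>0 < M\<close> p by (simp add: c_def d_def field_simps powr_diff powr_numeral)
  finally show ?thesis .
qed

lemma integral_square_le_integral_mean:
  assumes cont: "continuous_on {0..2*pi} (\<lambda>t. f (complex_of_real r * cis t))" and p: "2 \<le> p"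
  shows "integral {0..2*pi} (\<lambda>t. norm (f (complex_of_real r * cis t)) ^ 2)
           \<le> 2 * pi * integral_mean p f r ^ 2"
proof -
  define g where "g t = norm (f (complex_of_real r * cis t))" for t
  define I where "I = integral {0..2*pi} (\<lambda>t. g t powr p)"
  define J where "J = integral {0..2*pi} (\<lambda>t. g t ^ 2)"
  define m where "m = integral_mean p f r"
  have m: "m = (I / (2*pi)) powr (1/p)"
    by (simp add: m_def integral_mean_def I_def g_def)
  have contg: "continuous_on {0..2*pi} g"
    unfolding g_def by (intro continuous_intros cont)
  have "0 \<le> I"
    unfolding I_def using contg p
    by (intro integral_nonneg integrable_continuous_interval continuous_on_powr' continuous_intros)
      (auto simp: g_def)
  have "0 \<le> J"
    unfolding J_def by (intro integral_nonneg integrable_continuous_interval continuous_intros contg) auto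
  have "sqrt (J / (2*pi)) \<le> m"
  proof (rule dense_ge)
    fix M
    assume "m < M"
    then have "0 < M"
      using m by (meson le_less_trans powr_ge_zero)
    have "I / (2*pi) = m powr p"
      using \<open>0 \<le> I\<close> p by (simp add: m powr_powr)
    also have "\<dots> \<le> M powr p"
      using \<open>m < M\<close> p m by (intro powr_mono2) auto
    finally have "J \<le> (2*pi - 0) * M ^ 2"
      unfolding J_def I_def using contg \<open>0 < M\<close> p
      by (intro integral_square_le_of_integral_powr_le) (auto simp: g_def field_simps)
    then show "sqrt (J / (2*pi)) \<le> M"
      using \<open>0 < M\<close> by (intro real_le_lsqrt) (auto simp: field_simps)
  qed
  then have "sqrt (J / (2*pi)) ^ 2 \<le> m ^ 2"
    using \<open>0 \<le> J\<close> by (intro power_mono) simp_all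
  then have "J / (2*pi) \<le> m ^ 2"
    using \<open>0 \<le> J\<close> by (simp add: real_sqrt_pow2)
  then show ?thesis
    by (simp add: J_def g_def m_def field_simps)
qed

lemma integral_circle_square_le:
  assumes f: "f \<in> hardy_space p" and p: "2 \<le> p" and B: "hardy_norm p f \<le> ereal B"
    and r: "0 < r" "r < 1"
  shows "integral {0..2*pi} (\<lambda>t. norm (f (complex_of_real r * cis t)) ^ 2) \<le> 2 * pi * B ^ 2"
proof -
  have cont: "continuous_on {0..2*pi} (\<lambda>t. f (complex_of_real r * cis t))"
    using f r by (intro continuous_on_circle) (auto simp: hardy_space_def)
  show ?thesis
  proof (cases "p = \<infinity>")
    case True
    have "norm (f z) \<le> B" if "z \<in> ball 0 1" for z
      using B True that by (simp add: hardy_norm_def SUP_le_iff)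
    then have "norm (f (complex_of_real r * cis t)) ^ 2 \<le> B ^ 2" for t
      using r by (intro power_mono) (auto simp: norm_mult)
    then have "integral {0..2*pi} (\<lambda>t. norm (f (complex_of_real r * cis t)) ^ 2)
                 \<le> integral {0..2*pi} (\<lambda>t. B ^ 2)"
      using cont by (intro integral_le integrable_continuous_interval continuous_intros) auto
    then show ?thesis
      by (simp add: mult_ac)
  next
    case False
    define p' where "p' = real_of_ereal p"
    have "p = ereal p'" "2 \<le> p'"
      using p False unfolding p'_def by (cases p; auto)+
    have "ereal (integral_mean p' f r) \<le> hardy_norm p f"
      unfolding hardy_norm_def using False r \<open>p = ereal p'\<close> by (auto intro!: SUP_upper)
    then have "integral_mean p' f r \<le> B"
      using B by (metis ereal_less_eq(3) order_trans)
    then have "integral_mean p' f r ^ 2 \<le> B ^ 2"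
      by (intro power_mono) (simp_all add: integral_mean_def)
    with integral_square_le_integral_mean[OF cont \<open>2 \<le> p'\<close>] show ?thesis
      by (smt (verit) mult_left_mono pi_gt_zero)
  qed
qed

lemma taylor_coeff_sum_squares_le:
  assumes f: "f \<in> hardy_space p" and p: "2 \<le> p" and B: "hardy_norm p f \<le> ereal B"
  shows "(\<Sum>n<N. norm (taylor_coeff f n) ^ 2) \<le> B ^ 2"
proof -
  have holo: "f holomorphic_on ball 0 1"
    using f by (simp add: hardy_space_def)
  have "(\<Sum>n<N. norm (taylor_coeff f n) ^ 2 * r ^ (2*n)) \<le> B ^ 2" if r: "0 < r" "r < 1" for r
  proof -
    have "2 * pi * (\<Sum>n<N. norm (taylor_coeff f n * r ^ n) ^ 2)
            \<le> integral {0..2*pi} (\<lambda>t. norm (f (complex_of_real r * cis t)) ^ 2)"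
      using taylor_coeff_circle_has_integral[OF holo r] r
      by (intro bessel_inequality continuous_on_circle[OF holo]) (auto simp: mult_ac)
    also have "\<dots> \<le> 2 * pi * B ^ 2"
      by (rule integral_circle_square_le[OF f p B r])
    finally show ?thesis
      using r by (simp add: norm_mult norm_power power_mult_distrib power_mult mult.commute)
  qed
  then have "\<forall>\<^sub>F r in at_left 1. (\<Sum>n<N. norm (taylor_coeff f n) ^ 2 * r ^ (2*n)) \<le> B ^ 2"
    using eventually_at_left_real[of 0 "1::real"] by (auto elim: eventually_mono)
  moreover have "((\<lambda>r::real. \<Sum>n<N. norm (taylor_coeff f n) ^ 2 * r ^ (2*n))
                   \<longlongrightarrow> (\<Sum>n<N. norm (taylor_coeff f n) ^ 2 * 1 ^ (2*n))) (at_left 1)"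
    by (intro tendsto_intros)
  ultimately show ?thesis
    by (auto intro: tendsto_upperbound)
qed

section \<open>Compactness of the multiplier\<close>

lemma norm_le_lq_norm_multiplier_power_diff:
  assumes q: "0 < q" and a: "in_lq q a"
  shows "norm (lam m) \<le> lq_norm q (\<lambda>n. multiplier lam (\<lambda>z. z ^ m) n - a n) + norm (a m)"
proof -
  have "in_lq q (\<lambda>n. multiplier lam (\<lambda>z. z ^ m) n - a n)"
    unfolding in_lq_def
  proof (subst summable_cong)
    show "\<forall>\<^sub>F n in sequentially.
            norm (multiplier lam (\<lambda>z. z ^ m) n - a n) powr q = norm (a n) powr q"
      unfolding eventually_sequentially by (rule exI[of _ "Suc m"]) (auto simp: multiplier_power)
    show "summable (\<lambda>n. norm (a n) powr q)"
      using a by (simp add: in_lq_def)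
  qed
  from norm_le_lq_norm[OF q this, of m] show ?thesis
    using norm_triangle_ineq[of "lam m - a m" "a m"] by (simp add: multiplier_power)
qed

lemma multiplier_compact_imp_LIMSEQ_zero:
  assumes p: "0 < p" and q: "0 < q" and compact: "multiplier_compact p q lam"
  shows "lam \<longlonglongrightarrow> 0"
proof (rule ccontr)
  assume "\<not> lam \<longlonglongrightarrow> 0"
  then obtain \<delta> and s :: "nat \<Rightarrow> nat" where "0 < \<delta>" "strict_mono s" and large: "\<And>k. \<delta> \<le> norm (lam (s k))"
    by (rule not_LIMSEQ_zero_imp_bounded_below_subseq) blast
  define F where "F k = (\<lambda>z::complex. z ^ s k)" for k
  have "\<And>k. F k \<in> hardy_space p \<and> hardy_norm p (F k) \<le> ereal 1"
    using power_in_hardy_space[OF p] hardy_norm_power_le_1[OF p] by (simp add: F_def one_ereal_def)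
  from compact[unfolded multiplier_compact_def, rule_format, of F 1, OF this]
  obtain r :: "nat \<Rightarrow> nat" and a where "strict_mono r" and a: "in_lq q a"
    and lim: "(\<lambda>j. lq_norm q (\<lambda>n. multiplier lam (F (r j)) n - a n)) \<longlonglongrightarrow> 0"
    by blast
  define t where "t = s \<circ> r"
  have "strict_mono t"
    unfolding t_def using \<open>strict_mono s\<close> \<open>strict_mono r\<close> by (rule strict_mono_o)
  have "(\<lambda>j. a (t j)) \<longlonglongrightarrow> 0"
    using LIMSEQ_subseq_LIMSEQ[OF in_lq_imp_LIMSEQ_zero[OF q a] \<open>strict_mono t\<close>]
    by (simp add: o_def)
  with lim have upper: "(\<lambda>j. lq_norm q (\<lambda>n. multiplier lam (F (r j)) n - a n) + norm (a (t j))) \<longlonglongrightarrow> 0"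
    by (intro tendsto_add_zero tendsto_norm_zero)
  have "(\<lambda>j. norm (lam (t j))) \<longlonglongrightarrow> 0"
    by (rule tendsto_sandwich[OF always_eventually always_eventually tendsto_const upper])
      (simp_all add: F_def t_def norm_le_lq_norm_multiplier_power_diff[OF q a])
  then have "\<forall>\<^sub>F j in sequentially. norm (lam (t j)) < \<delta>"
    using \<open>0 < \<delta>\<close> by (rule order_tendstoD)
  then show False
    using large by (auto simp: t_def eventually_sequentially not_less[symmetric])
qed

lemma LIMSEQ_zero_imp_multiplier_compact:
  assumes p: "2 \<le> p" and q: "2 \<le> q" and lam: "lam \<longlonglongrightarrow> 0"
  shows "multiplier_compact p q lam"
  unfolding multiplier_compact_def
proof (intro allI impI)
  fix F :: "nat \<Rightarrow> complex \<Rightarrow> complex" and B :: real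
  assume F: "\<forall>k. F k \<in> hardy_space p \<and> hardy_norm p (F k) \<le> ereal B"
  define c where "c k n = taylor_coeff (F k) n" for k n
  have c_l2: "(\<Sum>n<N. norm (c k n) ^ 2) \<le> B ^ 2" for k N
    using taylor_coeff_sum_squares_le[OF _ p] F by (simp add: c_def)
  have "0 \<le> B"
    using hardy_norm_nonneg[of p "F 0"] F by (metis ereal_less_eq(5) order_trans)
  have bounded: "\<And>n. bounded (range (\<lambda>k. c k n))"
    using norm_le_of_sum_squares_le[OF c_l2 \<open>0 \<le> B\<close>] by (auto simp: bounded_iff)
  obtain r :: "nat \<Rightarrow> nat" and d where "strict_mono r" and d: "\<And>n. (\<lambda>j. c (r j) n) \<longlonglongrightarrow> d n"
    using diagonal_subsequence_convergent[of c, OF bounded] by blast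
  have d_l2: "(\<Sum>n<N. norm (d n) ^ 2) \<le> B ^ 2" for N
  proof (rule tendsto_upperbound)
    show "(\<lambda>j. \<Sum>n<N. norm (c (r j) n) ^ 2) \<longlonglongrightarrow> (\<Sum>n<N. norm (d n) ^ 2)"
      by (intro tendsto_intros d)
  qed (simp_all add: c_l2)
  obtain L where L: "\<And>n. norm (lam n) \<le> L"
    using lam by (metis BseqE convergentI convergent_imp_Bseq less_imp_le)
  have "(\<lambda>j. lq_norm q (\<lambda>n. lam n * (c (r j) n - d n))) \<longlonglongrightarrow> 0"
    using sum_squares_diff_le[OF c_l2 d_l2] \<open>0 \<le> B\<close> LIM_zero[OF d] lam q
    by (intro lq_norm_mult_LIMSEQ_zero[where K = "2 * B"]) auto
  then have "(\<lambda>j. lq_norm q (\<lambda>n. multiplier lam (F (r j)) n - lam n * d n)) \<longlonglongrightarrow> 0"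
    by (simp add: multiplier_def c_def right_diff_distrib)
  moreover have "in_lq q (\<lambda>n. lam n * d n)"
    using d_l2 \<open>0 \<le> B\<close> L q by (rule in_lq_mult_of_sum_squares_le)
  ultimately show "\<exists>r a. strict_mono r \<and> in_lq q a \<and>
      (\<lambda>j. lq_norm q (\<lambda>n. multiplier lam (F (r j)) n - a n)) \<longlonglongrightarrow> 0"
    using \<open>strict_mono r\<close> by blast
qed

theorem corollary2p6:
  fixes p :: ereal and q :: real and lam :: "nat \<Rightarrow> complex"
  assumes "2 \<le> p" and "2 \<le> q"
    and "multiplier_bounded p q lam"
  shows "multiplier_compact p q lam \<longleftrightarrow> limsup (\<lambda>n. ereal (norm (lam n))) = 0"
proof -
  have "0 < p" "0 < q"
    using assms(1,2) by (auto intro: less_le_trans[of 0 2])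
  then show ?thesis
    unfolding limsup_norm_eq_0_iff
    using multiplier_compact_imp_LIMSEQ_zero LIMSEQ_zero_imp_multiplier_compact[OF assms(1,2)]
    by blast
qed

end
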